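(* Consider a network update in which a set of flow segments, each with a traffic volume, is moved from old subpaths to new subpaths, executed by the distributed scheduling heuristic ez-Schedule described in the context, starting from an initial configuration in which, for every directed link, the sum of volumes of the segments routed over it does not exceed its capacity. Then ez-Schedule is correct: at every time during the update and as long as update operations are executed, no link carries traffic exceeding its capacity (the update is congestion-free).
   Context: Each directed link has a capacity. Each switch $s$ maintains, for each of its outgoing links $\ell$, the residual capacity of $\ell$, namely the capacity of $\ell$ minus the total volume of the segments whose currently installed forwarding entries at $s$ route over $\ell$. Each segment is updated as in \textsc{Basic-Update} (GoodToMove messages propagate backwards along the new subpath, each switch installing its new entry before forwarding GoodToMove; after the first switch switches, Removing messages propagate along the old subpath and remove old entries, which frees the corresponding volume on the old links). ez-Schedule: each segment update is assigned by the controller a priority (high if it lies on a critical cycle of the dependency graph between update operations and link capacities, medium if it lies only on non-critical cycles, low otherwise). A switch receiving GoodToMove for a segment $S$ whose new entry uses outgoing link $\ell$ installs the new entry only if the residual capacity of $\ell$ is at least the volume of $S$; if there are pending higher-priority operations on $\ell$, it installs the entry only if in addition the residual capacity minus the volume of $S$ remains sufficient for those higher-priority operations; otherwise it waits until capacity is freed by removals. Upon installing, it decreases the residual capacity of $\ell$ by the volume of $S$. *)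

theory Defs
  imports Main "HOL.Real"
begin

text \<open>A forwarding entry of segment S is identified by its kind (old/new) and its
  index i on the corresponding subpath; it is installed at switch p!i and routes
  S over link edge p i.\<close>

definition edge :: "'a list \<Rightarrow> nat \<Rightarrow> 'a \<times> 'a" where
  "edge p i = (p ! i, p ! Suc i)"

datatype priority = Low | Medium | High

fun prio_rank :: "priority \<Rightarrow> nat" where
  "prio_rank Low = 0" | "prio_rank Medium = 1" | "prio_rank High = 2"

record ('sw, 'seg) ezstate =
  inst_old :: "('seg \<times> nat) set"
  inst_new :: "('seg \<times> nat) set"
  gtm      :: "('seg \<times> nat) set"   \<comment> \<open>pending GoodToMove for S at switch newp S ! i\<close>
  rmv      :: "('seg \<times> nat) set"   \<comment> \<open>pending Removing for S at switch oldp S ! i\<close>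
  resid    :: "'sw \<times> 'sw \<Rightarrow> real" \<comment> \<open>residual capacity kept by the source switch\<close>

definition link_load ::
  "'seg set \<Rightarrow> ('seg \<Rightarrow> real) \<Rightarrow> ('seg \<Rightarrow> 'sw list) \<Rightarrow> ('seg \<Rightarrow> 'sw list)
    \<Rightarrow> ('sw, 'seg) ezstate \<Rightarrow> 'sw \<times> 'sw \<Rightarrow> real" where
  "link_load Segs vol oldp newp st l =
     (\<Sum>S\<in>Segs. vol S *
        real (card {i. (S, i) \<in> inst_old st \<and> Suc i < length (oldp S) \<and> edge (oldp S) i = l}
            + card {i. (S, i) \<in> inst_new st \<and> Suc i < length (newp S) \<and> edge (newp S) i = l}))"

text \<open>Initial configuration: all old entries installed, no new entries, the last switch
  of every new subpath has sent GoodToMove to its predecessor, residual capacities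
  are capacity minus routed volume.\<close>
definition ez_init ::
  "'seg set \<Rightarrow> ('seg \<Rightarrow> real) \<Rightarrow> ('seg \<Rightarrow> 'sw list) \<Rightarrow> ('seg \<Rightarrow> 'sw list)
    \<Rightarrow> ('sw \<times> 'sw \<Rightarrow> real) \<Rightarrow> ('sw, 'seg) ezstate" where
  "ez_init Segs vol oldp newp cap =
     (let st0 = \<lparr> inst_old = {(S, i). S \<in> Segs \<and> Suc i < length (oldp S)},
                  inst_new = {},
                  gtm = {(S, length (newp S) - 2) | S. S \<in> Segs},
                  rmv = {},
                  resid = (\<lambda>_. 0) \<rparr>
      in st0\<lparr> resid := (\<lambda>l. cap l - link_load Segs vol oldp newp st0 l) \<rparr>)"

definition pending_hi ::
  "'seg set \<Rightarrow> ('seg \<Rightarrow> 'sw list) \<Rightarrow> ('seg \<Rightarrow> priority) \<Rightarrow> ('sw, 'seg) ezstate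
    \<Rightarrow> 'seg \<Rightarrow> 'sw \<times> 'sw \<Rightarrow> 'seg set" where
  "pending_hi Segs newp prio st S l =
     {S' \<in> Segs. prio_rank (prio S) < prio_rank (prio S') \<and>
        (\<exists>i. Suc i < length (newp S') \<and> edge (newp S') i = l \<and> (S', i) \<notin> inst_new st)}"

definition can_install ::
  "'seg set \<Rightarrow> ('seg \<Rightarrow> real) \<Rightarrow> ('seg \<Rightarrow> 'sw list) \<Rightarrow> ('seg \<Rightarrow> priority)
    \<Rightarrow> ('sw, 'seg) ezstate \<Rightarrow> 'seg \<Rightarrow> 'sw \<times> 'sw \<Rightarrow> bool" where
  "can_install Segs vol newp prio st S l \<longleftrightarrow>
     vol S \<le> resid st l \<and>
     (pending_hi Segs newp prio st S l \<noteq> {} \<longrightarrow>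
        (\<Sum>S'\<in>pending_hi Segs newp prio st S l. vol S') \<le> resid st l - vol S)"

inductive ez_reach ::
  "'seg set \<Rightarrow> ('seg \<Rightarrow> real) \<Rightarrow> ('seg \<Rightarrow> 'sw list) \<Rightarrow> ('seg \<Rightarrow> 'sw list)
    \<Rightarrow> ('seg \<Rightarrow> priority) \<Rightarrow> ('sw \<times> 'sw \<Rightarrow> real) \<Rightarrow> ('sw, 'seg) ezstate \<Rightarrow> bool"
  for Segs vol oldp newp prio cap where
  init: "ez_reach Segs vol oldp newp prio cap (ez_init Segs vol oldp newp cap)"
| gtm_mid: "\<lbrakk> ez_reach Segs vol oldp newp prio cap st; S \<in> Segs; (S, i) \<in> gtm st;
      0 < i; Suc i < length (newp S); l = edge (newp S) i;
      can_install Segs vol newp prio st S l \<rbrakk> \<Longrightarrow>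
    ez_reach Segs vol oldp newp prio cap
      (st\<lparr> inst_new := insert (S, i) (inst_new st),
           resid := (resid st)(l := resid st l - vol S),
           gtm := insert (S, i - 1) (gtm st - {(S, i)}) \<rparr>)"
| gtm_first: "\<lbrakk> ez_reach Segs vol oldp newp prio cap st; S \<in> Segs; (S, 0) \<in> gtm st;
      Suc 0 < length (newp S); l = edge (newp S) 0; lo = edge (oldp S) 0;
      can_install Segs vol newp prio st S l;
      r1 = (resid st)(l := resid st l - vol S);
      r2 = (if (S, 0) \<in> inst_old st then r1(lo := r1 lo + vol S) else r1) \<rbrakk> \<Longrightarrow>
    ez_reach Segs vol oldp newp prio cap
      (st\<lparr> inst_new := insert (S, 0) (inst_new st),
           inst_old := inst_old st - {(S, 0)},
           resid := r2,
           gtm := gtm st - {(S, 0)},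
           rmv := insert (S, 1) (rmv st) \<rparr>)"
| rmv_mid: "\<lbrakk> ez_reach Segs vol oldp newp prio cap st; S \<in> Segs; (S, i) \<in> rmv st;
      Suc i < length (oldp S); lo = edge (oldp S) i;
      r = (if (S, i) \<in> inst_old st then (resid st)(lo := resid st lo + vol S) else resid st) \<rbrakk> \<Longrightarrow>
    ez_reach Segs vol oldp newp prio cap
      (st\<lparr> inst_old := inst_old st - {(S, i)},
           resid := r,
           rmv := insert (S, Suc i) (rmv st - {(S, i)}) \<rparr>)"
| rmv_last: "\<lbrakk> ez_reach Segs vol oldp newp prio cap st; (S, i) \<in> rmv st;
      length (oldp S) \<le> Suc i \<rbrakk> \<Longrightarrow>
    ez_reach Segs vol oldp newp prio cap (st\<lparr> rmv := rmv st - {(S, i)} \<rparr>)"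

end

theory Submission
  imports Defs
begin

text \<open>The residual capacity kept for a link is a pessimistic account of its spare capacity:
  the invariant \<open>load + resid \<le> cap\<close> holds in every reachable state, because installing a
  new entry raises the load by at most the volume by which it lowers \<open>resid\<close>, and a removal
  lowers the load by exactly the volume it gives back to \<open>resid\<close>.  An entry is installed only
  if \<open>resid\<close> covers its volume, so \<open>resid\<close> never becomes negative on a link where it starts
  non-negative, which the initial capacity condition guarantees on every link.\<close>

definition route_count :: "('seg \<times> nat) set \<Rightarrow> ('seg \<Rightarrow> 'sw list) \<Rightarrow> 'seg \<Rightarrow> 'sw \<times> 'sw \<Rightarrow> nat"
  where "route_count E p S l = card {i. (S, i) \<in> E \<and> Suc i < length (p S) \<and> edge (p S) i = l}"

lemma link_load_route_count:
  "link_load Segs vol oldp newp st l =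
     (\<Sum>S\<in>Segs. vol S * real (route_count (inst_old st) oldp S l + route_count (inst_new st) newp S l))"
  unfolding link_load_def route_count_def ..

lemma finite_route_indices: "finite {i. (S, i) \<in> E \<and> Suc i < length (p S) \<and> edge (p S) i = l}"
  by (rule finite_subset[of _ "{..<length (p S)}"]) auto

lemma route_count_insert_le:
  "route_count (insert (T, j) E) p S l \<le> route_count E p S l + (if S = T \<and> edge (p T) j = l then 1 else 0)"
proof -
  let ?A = "{i. (S, i) \<in> E \<and> Suc i < length (p S) \<and> edge (p S) i = l}"
  have "{i. (S, i) \<in> insert (T, j) E \<and> Suc i < length (p S) \<and> edge (p S) i = l}
          \<subseteq> (if S = T \<and> edge (p T) j = l then insert j ?A else ?A)"
    (is "?B \<subseteq> _") by auto
  then have "card ?B \<le> card (if S = T \<and> edge (p T) j = l then insert j ?A else ?A)"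
    using finite_route_indices[of S E p l] by (intro card_mono) auto
  then show ?thesis
    unfolding route_count_def
    using finite_route_indices[of S E p l]
    by (auto simp: card_insert_if split: if_splits)
qed

lemma route_count_remove:
  "route_count (E - {(T, j)}) p S l
     + (if S = T \<and> (T, j) \<in> E \<and> Suc j < length (p T) \<and> edge (p T) j = l then 1 else 0)
   = route_count E p S l"
proof (cases "S = T \<and> (T, j) \<in> E \<and> Suc j < length (p T) \<and> edge (p T) j = l")
  case True
  let ?A = "{i. (S, i) \<in> E - {(T, j)} \<and> Suc i < length (p S) \<and> edge (p S) i = l}"
  have "{i. (S, i) \<in> E \<and> Suc i < length (p S) \<and> edge (p S) i = l} = insert j ?A"
    using True by auto
  moreover have "j \<notin> ?A" using True by simp
  ultimately show ?thesis
    using True finite_route_indices[of S "E - {(T, j)}" p l] by (simp add: route_count_def)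
next
  case False
  then have "{i. (S, i) \<in> E - {(T, j)} \<and> Suc i < length (p S) \<and> edge (p S) i = l}
           = {i. (S, i) \<in> E \<and> Suc i < length (p S) \<and> edge (p S) i = l}"
    by auto
  with False show ?thesis by (simp add: route_count_def)
qed

lemma sum_mult_single_indicator:
  fixes f :: "'a \<Rightarrow> 'b::semiring_1"
  assumes "finite A" "a \<in> A"
  shows "(\<Sum>x\<in>A. f x * (if x = a \<and> P then 1 else 0)) = (if P then f a else 0)"
  using assms by (cases P) (simp_all add: if_distrib[of "(*) _"] cong: if_cong)

lemma link_load_insert_new_le:
  assumes "finite Segs" "T \<in> Segs" "\<And>S. S \<in> Segs \<Longrightarrow> 0 \<le> vol S"
    and "inst_old st' = inst_old st" "inst_new st' = insert (T, j) (inst_new st)"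
  shows "link_load Segs vol oldp newp st' l
           \<le> link_load Segs vol oldp newp st l + (if edge (newp T) j = l then vol T else 0)"
proof -
  let ?d = "\<lambda>S. vol S * (if S = T \<and> edge (newp T) j = l then 1 else 0)"
  have "vol S * real (route_count (inst_old st') oldp S l + route_count (inst_new st') newp S l)
        \<le> vol S * real (route_count (inst_old st) oldp S l + route_count (inst_new st) newp S l) + ?d S"
    if "S \<in> Segs" for S
  proof -
    have "real (route_count (inst_old st') oldp S l + route_count (inst_new st') newp S l)
          \<le> real (route_count (inst_old st) oldp S l + route_count (inst_new st) newp S l)
             + (if S = T \<and> edge (newp T) j = l then 1 else 0)"
      using route_count_insert_le[of T j "inst_new st" newp S l] assms(4,5)
      by (cases "S = T \<and> edge (newp T) j = l") auto
    from mult_left_mono[OF this assms(3)[OF that]] show ?thesis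
      by (simp only: distrib_left)
  qed
  then have "link_load Segs vol oldp newp st' l \<le> (\<Sum>S\<in>Segs. vol S *
      real (route_count (inst_old st) oldp S l + route_count (inst_new st) newp S l) + ?d S)"
    unfolding link_load_route_count by (rule sum_mono)
  also have "\<dots> = link_load Segs vol oldp newp st l + (if edge (newp T) j = l then vol T else 0)"
    using assms(1,2) by (simp add: sum.distrib link_load_route_count sum_mult_single_indicator)
  finally show ?thesis .
qed

lemma link_load_remove_old:
  assumes "finite Segs" "T \<in> Segs"
    and "inst_old st' = inst_old st - {(T, j)}" "inst_new st' = inst_new st"
  shows "link_load Segs vol oldp newp st' l = link_load Segs vol oldp newp st l
     - (if (T, j) \<in> inst_old st \<and> Suc j < length (oldp T) \<and> edge (oldp T) j = l then vol T else 0)"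
proof -
  let ?c = "(T, j) \<in> inst_old st \<and> Suc j < length (oldp T) \<and> edge (oldp T) j = l"
  have "vol S * real (route_count (inst_old st') oldp S l + route_count (inst_new st') newp S l)
        = vol S * real (route_count (inst_old st) oldp S l + route_count (inst_new st) newp S l)
          - vol S * (if S = T \<and> ?c then 1 else 0)"
    for S
  proof -
    have "real (route_count (inst_old st) oldp S l)
          = real (route_count (inst_old st') oldp S l) + (if S = T \<and> ?c then 1 else 0)"
      using arg_cong[OF route_count_remove[of "inst_old st" T j oldp S l], of real] assms(3)
      by (simp only: of_nat_add of_nat_1 of_nat_0 if_distrib[of real])
    then show ?thesis
      unfolding assms(4) of_nat_add by (simp add: algebra_simps split del: if_split)
  qed
  then have "link_load Segs vol oldp newp st' l = (\<Sum>S\<in>Segs. vol S *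
      real (route_count (inst_old st) oldp S l + route_count (inst_new st) newp S l)
      - vol S * (if S = T \<and> ?c then 1 else 0))"
    unfolding link_load_route_count by simp
  also have "\<dots> = link_load Segs vol oldp newp st l - (if ?c then vol T else 0)"
    using assms(1,2) by (simp add: sum_subtractf link_load_route_count sum_mult_single_indicator)
  finally show ?thesis .
qed

lemma ez_init_link_load_add_resid:
  "link_load Segs vol oldp newp (ez_init Segs vol oldp newp cap) l
     + resid (ez_init Segs vol oldp newp cap) l = cap l"
  by (simp add: ez_init_def link_load_def)

lemma ez_reach_inst_old_subset:
  "ez_reach Segs vol oldp newp prio cap st \<Longrightarrow>
   inst_old st \<subseteq> {(S, i). S \<in> Segs \<and> Suc i < length (oldp S)}"
  by (induction rule: ez_reach.induct) (auto simp: ez_init_def)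

lemma ez_reach_resid_nonneg:
  assumes "\<And>S. S \<in> Segs \<Longrightarrow> 0 \<le> vol S"
    and "ez_reach Segs vol oldp newp prio cap st"
    and "0 \<le> resid (ez_init Segs vol oldp newp cap) l"
  shows "0 \<le> resid st l"
  using assms(2,3)
  by (induction rule: ez_reach.induct) (auto simp: can_install_def assms(1))

lemma ez_reach_link_load_add_resid_le:
  assumes fin: "finite Segs" and vol_nonneg: "\<And>S. S \<in> Segs \<Longrightarrow> 0 \<le> vol S"
    and "ez_reach Segs vol oldp newp prio cap st"
  shows "link_load Segs vol oldp newp st l + resid st l \<le> cap l"
  using assms(3)
proof (induction rule: ez_reach.induct)
  case init
  then show ?case by (simp add: ez_init_link_load_add_resid)
next
  case (gtm_mid st S i l')
  let ?st' = "st\<lparr> inst_new := insert (S, i) (inst_new st),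
                  resid := (resid st)(l' := resid st l' - vol S),
                  gtm := insert (S, i - 1) (gtm st - {(S, i)}) \<rparr>"
  have "link_load Segs vol oldp newp ?st' l
          \<le> link_load Segs vol oldp newp st l + (if edge (newp S) i = l then vol S else 0)"
    by (rule link_load_insert_new_le) (simp_all add: fin gtm_mid.hyps(2) vol_nonneg)
  then show ?case using gtm_mid.IH \<open>l' = edge (newp S) i\<close> by auto
next
  case (gtm_first st S l' lo r1 r2)
  let ?stA = "st\<lparr> inst_new := insert (S, 0) (inst_new st) \<rparr>"
  let ?st' = "st\<lparr> inst_new := insert (S, 0) (inst_new st),
                  inst_old := inst_old st - {(S, 0)}, resid := r2,
                  gtm := gtm st - {(S, 0)}, rmv := insert (S, 1) (rmv st) \<rparr>"
  have "(S, 0) \<in> inst_old st \<Longrightarrow> Suc 0 < length (oldp S)"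
    \<comment> \<open>otherwise the freed volume would be credited to \<open>resid\<close> without lowering any load\<close>
    using ez_reach_inst_old_subset[OF gtm_first.hyps(1)] by auto
  moreover have "link_load Segs vol oldp newp ?st' l = link_load Segs vol oldp newp ?stA l
      - (if (S, 0) \<in> inst_old ?stA \<and> Suc 0 < length (oldp S) \<and> edge (oldp S) 0 = l then vol S else 0)"
    by (rule link_load_remove_old) (simp_all add: fin gtm_first.hyps(2))
  moreover have "link_load Segs vol oldp newp ?stA l
          \<le> link_load Segs vol oldp newp st l + (if edge (newp S) 0 = l then vol S else 0)"
    by (rule link_load_insert_new_le) (simp_all add: fin gtm_first.hyps(2) vol_nonneg)
  ultimately show ?case
    using gtm_first.IH gtm_first.hyps(5-6,8-9) by auto
next
  case (rmv_mid st S i lo r)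
  let ?st' = "st\<lparr> inst_old := inst_old st - {(S, i)}, resid := r,
                  rmv := insert (S, Suc i) (rmv st - {(S, i)}) \<rparr>"
  have "link_load Segs vol oldp newp ?st' l = link_load Segs vol oldp newp st l
      - (if (S, i) \<in> inst_old st \<and> Suc i < length (oldp S) \<and> edge (oldp S) i = l then vol S else 0)"
    by (rule link_load_remove_old) (simp_all add: fin rmv_mid.hyps(2))
  then show ?case using rmv_mid.IH rmv_mid.hyps(4-6) by auto
next
  case (rmv_last st S i)
  then show ?case by (simp add: link_load_def)
qed

theorem theorem3:
  fixes Segs :: "'seg set" and vol :: "'seg \<Rightarrow> real"
    and oldp newp :: "'seg \<Rightarrow> 'sw list" and prio :: "'seg \<Rightarrow> priority"
    and cap :: "'sw \<times> 'sw \<Rightarrow> real" and Links :: "('sw \<times> 'sw) set"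
  assumes "finite Segs"
    and "\<And>S. S \<in> Segs \<Longrightarrow> 0 \<le> vol S"
    and "\<And>S. S \<in> Segs \<Longrightarrow> 2 \<le> length (oldp S) \<and> 2 \<le> length (newp S)"
    and "\<And>S. S \<in> Segs \<Longrightarrow> hd (oldp S) = hd (newp S) \<and> last (oldp S) = last (newp S)"
    and "\<And>S i. S \<in> Segs \<Longrightarrow> Suc i < length (oldp S) \<Longrightarrow> edge (oldp S) i \<in> Links"
    and "\<And>S i. S \<in> Segs \<Longrightarrow> Suc i < length (newp S) \<Longrightarrow> edge (newp S) i \<in> Links"
    and "\<And>l. l \<in> Links \<Longrightarrow>
           link_load Segs vol oldp newp (ez_init Segs vol oldp newp cap) l \<le> cap l"
    and "ez_reach Segs vol oldp newp prio cap st"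
  shows "\<forall>l\<in>Links. link_load Segs vol oldp newp st l \<le> cap l"
  \<comment> \<open>The shape of the paths (hypotheses 3 to 6) is irrelevant for congestion freedom.\<close>
proof
  fix l assume "l \<in> Links"
  then have "0 \<le> resid (ez_init Segs vol oldp newp cap) l"
    using assms(7)[OF \<open>l \<in> Links\<close>] ez_init_link_load_add_resid[of Segs vol oldp newp cap l] by linarith
  then have "0 \<le> resid st l"
    using ez_reach_resid_nonneg assms(2,8) by blast
  then show "link_load Segs vol oldp newp st l \<le> cap l"
    using ez_reach_link_load_add_resid_le[OF assms(1,2,8), of l] by linarith
qed

end
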